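(* Let either $t_i=i+\beta$ for $i\ge1$ with $\beta>-1$, and set $\rho(u)=\log u$; or $t_i=i^\alpha$ for $i\ge1$ with $0<\alpha<1$, and set $\rho(u)=u^{1/\alpha-1}$. Let $n(t)=\#\{k\ge1: t_k\le t\}$. There are constants $C>0$ and $D$, depending only on $\alpha$ or $\beta$, such that for all sufficiently large $M$, \[ u^3\int_0^{t_M}\frac{n(t)}{t^2(t^2+u^2+ut\sqrt2)}\,dt\ge C\,u\,\rho(\min(t_M,u)) \] whenever $u\ge D$. *)

theory Defs
  imports "HOL-Analysis.Analysis"
begin

definition count_le :: "(nat \<Rightarrow> real) \<Rightarrow> real \<Rightarrow> nat" where
  "count_le t x = card {k::nat. k \<ge> 1 \<and> t k \<le> x}"

end

(*
  On [0, t M] the counting function equals the sum over k <= M of the indicators of [t k, t M],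
  so the integral splits into integrals of the weight over [t k, t M].  When
  2 t k <= min (t M) u, the weight is at least 1 / (16 t k^2 u^2) on [t k, 2 t k], so after
  multiplication by u^3 each such point contributes at least u / (16 t k).  It remains to
  bound the partial sums of 1 / t k up to m / 2 = min (t M) u / 2 from below: for
  t k = k + beta they grow like the harmonic numbers, i.e. like ln m; for t k = k powr alpha
  there are about K = (m / 2) powr (1 / alpha) terms, each at least K powr (- alpha), which
  gives K powr (1 - alpha), a constant multiple of m powr (1 / alpha - 1).
*)
theory Submission
  imports Defs "HOL-Real_Asymp.Real_Asymp"
begin

definition weight :: "real \<Rightarrow> real \<Rightarrow> real" where
  "weight u x = 1 / (x\<^sup>2 * (x\<^sup>2 + u\<^sup>2 + u * x * sqrt 2))"

lemma weight_denominator_pos: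
  fixes u x :: real
  assumes "0 < x" "0 \<le> u"
  shows "0 < x\<^sup>2 * (x\<^sup>2 + u\<^sup>2 + u * x * sqrt 2)"
  using assms by (simp add: add_pos_nonneg)

lemma weight_nonneg: "0 < x \<Longrightarrow> 0 \<le> u \<Longrightarrow> 0 \<le> weight u x"
  using weight_denominator_pos[of x u] by (simp add: weight_def)

lemma weight_integrable_on:
  assumes "0 < a" "0 \<le> u"
  shows "weight u integrable_on {a..b}"
proof (rule integrable_continuous_interval)
  have "x\<^sup>2 * (x\<^sup>2 + u\<^sup>2 + u * x * sqrt 2) \<noteq> 0" if "x \<in> {a..b}" for x
    using weight_denominator_pos[of x u] that assms by auto
  then show "continuous_on {a..b} (weight u)"
    unfolding weight_def by (intro continuous_intros ballI)
qed

lemma weight_ge: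
  fixes u x :: real
  assumes "0 < x" "x \<le> u"
  shows "1 / (4 * x\<^sup>2 * u\<^sup>2) \<le> weight u x"
proof -
  have "u * x * sqrt 2 \<le> u * u * 2"
    using assms by (intro mult_mono) (auto simp: real_sqrt_le_iff')
  moreover have "x\<^sup>2 \<le> u\<^sup>2"
    using assms by (intro power_mono) auto
  ultimately have "x\<^sup>2 + u\<^sup>2 + u * x * sqrt 2 \<le> 4 * u\<^sup>2"
    by (simp add: power2_eq_square)
  then have "x\<^sup>2 * (x\<^sup>2 + u\<^sup>2 + u * x * sqrt 2) \<le> x\<^sup>2 * (4 * u\<^sup>2)"
    by (intro mult_left_mono) auto
  then show ?thesis
    unfolding weight_def
    using weight_denominator_pos[of x u] assms by (intro frac_le) (auto simp: ac_simps)
qed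

lemma integral_weight_ge:
  fixes a b u :: real
  assumes "0 < a" "2 * a \<le> b" "2 * a \<le> u"
  shows "1 / (16 * a * u\<^sup>2) \<le> integral {a..b} (weight u)"
proof -
  have pointwise: "1 / (16 * a\<^sup>2 * u\<^sup>2) \<le> weight u x" if "x \<in> {a..2 * a}" for x
  proof -
    have "x\<^sup>2 \<le> (2 * a)\<^sup>2"
      using that assms by (intro power_mono) auto
    then have "1 / (16 * a\<^sup>2 * u\<^sup>2) \<le> 1 / (4 * x\<^sup>2 * u\<^sup>2)"
      using that assms by (intro divide_left_mono) (auto simp: power2_eq_square)
    also have "\<dots> \<le> weight u x"
      using that assms by (intro weight_ge) auto
    finally show ?thesis .
  qed
  have "1 / (16 * a * u\<^sup>2) = integral {a..2 * a} (\<lambda>x. 1 / (16 * a\<^sup>2 * u\<^sup>2))"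
    using assms by (simp add: power2_eq_square field_simps)
  also have "\<dots> \<le> integral {a..2 * a} (weight u)"
    using assms pointwise by (intro integral_le weight_integrable_on) auto
  also have "\<dots> \<le> integral {a..b} (weight u)"
    using assms by (intro integral_subset_le weight_integrable_on) (auto intro!: weight_nonneg)
  finally show ?thesis .
qed

lemma count_le_eq_card_upto:
  assumes mono: "strict_mono_on {1..} t" and "1 \<le> M" "x \<le> t M"
  shows "count_le t x = card {k \<in> {1..M}. t k \<le> x}"
proof -
  have "k \<le> M" if "1 \<le> k" "t k \<le> x" for k
  proof (rule ccontr)
    assume "\<not> k \<le> M"
    then have "t M < t k"
      using mono \<open>1 \<le> M\<close> by (auto simp: strict_mono_on_def)
    with that \<open>x \<le> t M\<close> show False by linarith
  qed
  then show ?thesis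
    unfolding count_le_def by (intro arg_cong[where f = card]) auto
qed

lemma integral_count_le_mult:
  fixes t :: "nat \<Rightarrow> real" and g :: "real \<Rightarrow> real"
  assumes mono: "strict_mono_on {1..} t" and nonneg: "\<And>k. 1 \<le> k \<Longrightarrow> 0 \<le> t k"
    and "1 \<le> M" and int: "\<And>k. k \<in> {1..M} \<Longrightarrow> g integrable_on {t k..t M}"
  shows "integral {0..t M} (\<lambda>x. real (count_le t x) * g x) = (\<Sum>k=1..M. integral {t k..t M} g)"
proof -
  have split: "real (count_le t x) * g x = (\<Sum>k=1..M. if x \<in> {t k..t M} then g x else 0)"
    if "x \<in> {0..t M}" for x
  proof -
    have "real (count_le t x) = (\<Sum>k=1..M. if t k \<le> x then 1 else 0)"
      using that count_le_eq_card_upto[OF mono \<open>1 \<le> M\<close>, of x]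
      by (simp add: sum.inter_filter[symmetric])
    then show ?thesis
      using that by (auto simp: sum_distrib_right intro!: sum.cong)
  qed
  have "((\<lambda>x. \<Sum>k=1..M. if x \<in> {t k..t M} then g x else 0)
          has_integral (\<Sum>k=1..M. integral {t k..t M} g)) {0..t M}"
  proof (intro has_integral_sum finite_atLeastAtMost)
    fix k assume k: "k \<in> {1..M}"
    have sub: "{t k..t M} \<subseteq> {0..t M}"
      using k nonneg by auto
    show "((\<lambda>x. if x \<in> {t k..t M} then g x else 0) has_integral integral {t k..t M} g) {0..t M}"
      unfolding has_integral_restrict[OF sub] by (rule integrable_integral[OF int[OF k]])
  qed
  then show ?thesis
    by (subst integral_cong[OF split]) (auto intro: integral_unique)
qed

lemma integral_count_le_weight_ge:
  fixes t :: "nat \<Rightarrow> real"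
  assumes mono: "strict_mono_on {1..} t" and pos: "\<And>k. 1 \<le> k \<Longrightarrow> 0 < t k"
    and "0 < u" and "1 \<le> M" and "K \<le> M"
    and small: "\<And>k. k \<in> {1..K} \<Longrightarrow> 2 * t k \<le> min (t M) u"
  shows "u / 16 * (\<Sum>k=1..K. 1 / t k)
           \<le> u ^ 3 * integral {0..t M} (\<lambda>x. real (count_le t x) * weight u x)"
proof -
  have piece_nonneg: "0 \<le> integral {t k..t M} (weight u)" if "1 \<le> k" for k
    using pos[OF that] \<open>0 < u\<close>
    by (intro integral_nonneg weight_integrable_on weight_nonneg) auto
  have "(\<Sum>k=1..K. 1 / (16 * t k * u\<^sup>2)) \<le> (\<Sum>k=1..K. integral {t k..t M} (weight u))"
    using small pos by (intro sum_mono integral_weight_ge) auto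
  also have "\<dots> \<le> (\<Sum>k=1..M. integral {t k..t M} (weight u))"
    using \<open>K \<le> M\<close> by (intro sum_mono2 piece_nonneg) auto
  also have "\<dots> = integral {0..t M} (\<lambda>x. real (count_le t x) * weight u x)"
    using pos \<open>0 < u\<close> \<open>1 \<le> M\<close>
    by (intro integral_count_le_mult[symmetric] mono weight_integrable_on) (auto intro: less_imp_le)
  finally have "u ^ 3 * (\<Sum>k=1..K. 1 / (16 * t k * u\<^sup>2))
      \<le> u ^ 3 * integral {0..t M} (\<lambda>x. real (count_le t x) * weight u x)"
    using \<open>0 < u\<close> by (intro mult_left_mono) auto
  moreover have "u ^ 3 * (\<Sum>k=1..K. 1 / (16 * t k * u\<^sup>2)) = u / 16 * (\<Sum>k=1..K. 1 / t k)"
    using \<open>0 < u\<close> by (simp add: sum_distrib_left power2_eq_square power3_eq_cube)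
  ultimately show ?thesis
    by simp
qed

lemma sum_inverse_shifted_ge_ln:
  fixes \<beta> :: real
  assumes "-1 < \<beta>"
  shows "ln (real K + 1) / (1 + \<bar>\<beta>\<bar>) \<le> (\<Sum>k=1..K. 1 / (real k + \<beta>))"
proof -
  have "ln (real K + 1) / (1 + \<bar>\<beta>\<bar>) \<le> harm K / (1 + \<bar>\<beta>\<bar>)"
    by (intro divide_right_mono ln_le_harm) auto
  also have "\<dots> = (\<Sum>k=1..K. 1 / ((1 + \<bar>\<beta>\<bar>) * real k))"
    unfolding harm_def sum_divide_distrib by (intro sum.cong) (auto simp: field_simps)
  also have "\<dots> \<le> (\<Sum>k=1..K. 1 / (real k + \<beta>))"
  proof (intro sum_mono frac_le)
    fix k assume "k \<in> {1..K}"
    then have "1 \<le> real k" by simp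
    then show "0 < real k + \<beta>" "real k + \<beta> \<le> (1 + \<bar>\<beta>\<bar>) * real k"
      using assms by (auto simp: algebra_simps intro: order_trans[OF _ mult_left_mono[of 1]])
  qed auto
  finally show ?thesis .
qed

lemma sum_inverse_powr_ge:
  fixes \<alpha> :: real
  assumes "0 \<le> \<alpha>"
  shows "real K powr (1 - \<alpha>) \<le> (\<Sum>k=1..K. 1 / real k powr \<alpha>)"
proof (cases "K = 0")
  case False
  then have "real K powr (1 - \<alpha>) = (\<Sum>k=1..K. 1 / real K powr \<alpha>)"
    by (simp add: powr_diff)
  also have "\<dots> \<le> (\<Sum>k=1..K. 1 / real k powr \<alpha>)"
    using assms by (intro sum_mono frac_le powr_mono2) auto
  finally show ?thesis .
qed simp

lemma partial_sum_inverse_shifted_ge_ln: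
  fixes \<beta> m :: real
  assumes "-1 < \<beta>" and m: "max 16 (4 * \<bar>\<beta>\<bar>) \<le> m"
  shows "\<exists>K. (\<forall>k\<in>{1..K}. 2 * (real k + \<beta>) \<le> m)
           \<and> ln m / (2 * (1 + \<bar>\<beta>\<bar>)) \<le> (\<Sum>k=1..K. 1 / (real k + \<beta>))"
proof (intro exI conjI)
  define K where "K = nat \<lfloor>m / 2 - \<beta>\<rfloor>"
  have "m / 4 \<le> m / 2 - \<beta>"
    using m by linarith
  then have K: "real K \<le> m / 2 - \<beta>" "m / 4 \<le> real K + 1"
    using m unfolding K_def by linarith+
  then show "\<forall>k\<in>{1..K}. 2 * (real k + \<beta>) \<le> m"
    by auto
  have "2 * ln 4 = ln ((4::real) ^ 2)"
    using ln_realpow[of "4::real" 2] by simp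
  also have "\<dots> \<le> ln m"
    using m by simp
  finally have "ln m / 2 \<le> ln (m / 4)"
    using m by (simp add: ln_div)
  also have "\<dots> \<le> ln (real K + 1)"
    using K m by simp
  finally have "ln m / 2 / (1 + \<bar>\<beta>\<bar>) \<le> ln (real K + 1) / (1 + \<bar>\<beta>\<bar>)"
    by (intro divide_right_mono) auto
  also have "\<dots> \<le> (\<Sum>k=1..K. 1 / (real k + \<beta>))"
    using \<open>-1 < \<beta>\<close> by (rule sum_inverse_shifted_ge_ln)
  finally show "ln m / (2 * (1 + \<bar>\<beta>\<bar>)) \<le> (\<Sum>k=1..K. 1 / (real k + \<beta>))"
    by (simp only: divide_divide_eq_left)
qed

lemma partial_sum_inverse_powr_ge:
  fixes \<alpha> m :: real
  assumes "0 < \<alpha>" "\<alpha> \<le> 1" "4 \<le> m"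
  shows "\<exists>K. (\<forall>k\<in>{1..K}. 2 * real k powr \<alpha> \<le> m)
           \<and> m powr (1 / \<alpha> - 1) / (2 * 2 powr (1 / \<alpha> - 1)) \<le> (\<Sum>k=1..K. 1 / real k powr \<alpha>)"
proof (intro exI conjI)
  define y where "y = (m / 2) powr (1 / \<alpha>)"
  define K where "K = nat \<lfloor>y\<rfloor>"
  have "m / 2 \<le> y"
    unfolding y_def using assms powr_mono[of 1 "1 / \<alpha>" "m / 2"] by simp
  then have y: "2 \<le> y" and K: "real K \<le> y" "y / 2 \<le> real K"
    using assms unfolding K_def by linarith+
  have y_powr: "y powr \<alpha> = m / 2"
    unfolding y_def using assms by (simp add: powr_powr)
  show "\<forall>k\<in>{1..K}. 2 * real k powr \<alpha> \<le> m"
  proof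
    fix k assume "k \<in> {1..K}"
    then have "real k powr \<alpha> \<le> y powr \<alpha>"
      using K assms by (intro powr_mono2) auto
    then show "2 * real k powr \<alpha> \<le> m"
      by (simp add: y_powr)
  qed
  have "y powr (1 - \<alpha>) / 2 \<le> y powr (1 - \<alpha>) / 2 powr (1 - \<alpha>)"
    using assms powr_mono[of "1 - \<alpha>" 1 2] by (intro divide_left_mono) auto
  also have "\<dots> = (y / 2) powr (1 - \<alpha>)"
    using y by (simp add: powr_divide)
  also have "\<dots> \<le> real K powr (1 - \<alpha>)"
    using K y assms by (intro powr_mono2) auto
  also have "\<dots> \<le> (\<Sum>k=1..K. 1 / real k powr \<alpha>)"
    using assms by (intro sum_inverse_powr_ge) auto
  finally have "y powr (1 - \<alpha>) / 2 \<le> (\<Sum>k=1..K. 1 / real k powr \<alpha>)" .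
  moreover have "y powr (1 - \<alpha>) = m powr (1 / \<alpha> - 1) / 2 powr (1 / \<alpha> - 1)"
    unfolding y_def using assms by (simp add: powr_powr powr_divide field_simps)
  ultimately show
    "m powr (1 / \<alpha> - 1) / (2 * 2 powr (1 / \<alpha> - 1)) \<le> (\<Sum>k=1..K. 1 / real k powr \<alpha>)"
    by simp
qed

lemma weight_integral_lower_bound:
  fixes t :: "nat \<Rightarrow> real" and \<rho> :: "real \<Rightarrow> real" and c m0 :: real
  assumes mono: "strict_mono_on {1..} t" and pos: "\<And>k. 1 \<le> k \<Longrightarrow> 0 < t k"
    and unbounded: "filterlim t at_top sequentially" and "0 < c" and "0 < m0"
    and partial_sums: "\<And>m. m0 \<le> m \<Longrightarrow>
      \<exists>K. (\<forall>k\<in>{1..K}. 2 * t k \<le> m) \<and> c * \<rho> m \<le> (\<Sum>k=1..K. 1 / t k)"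
  shows "\<exists>C>0. \<exists>D. \<exists>M0. \<forall>M\<ge>M0. \<forall>u\<ge>D.
           C * u * \<rho> (min (t M) u)
             \<le> u ^ 3 * integral {0..t M} (\<lambda>x. real (count_le t x) * weight u x)"
proof -
  obtain M0 where M0: "\<And>M. M0 \<le> M \<Longrightarrow> m0 \<le> t M"
    using unbounded by (auto simp: filterlim_at_top eventually_sequentially)
  have "c / 16 * u * \<rho> (min (t M) u)
      \<le> u ^ 3 * integral {0..t M} (\<lambda>x. real (count_le t x) * weight u x)"
    if M: "max 1 M0 \<le> M" and u: "m0 \<le> u" for M u
  proof -
    define m where "m = min (t M) u"
    have "m0 \<le> m"
      using M0 M u by (simp add: m_def)
    then obtain K where small: "\<forall>k\<in>{1..K}. 2 * t k \<le> m"
      and sum: "c * \<rho> m \<le> (\<Sum>k=1..K. 1 / t k)"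
      using partial_sums by blast
    have "K \<le> M"
    proof (rule ccontr)
      assume "\<not> K \<le> M"
      then have "2 * t (Suc M) \<le> t M" and "t M < t (Suc M)"
        using small mono M by (auto simp: m_def strict_mono_on_def)
      with pos[of "Suc M"] show False by linarith
    qed
    have "c / 16 * u * \<rho> m = u / 16 * (c * \<rho> m)"
      by simp
    also have "\<dots> \<le> u / 16 * (\<Sum>k=1..K. 1 / t k)"
      using sum u \<open>0 < m0\<close> by (intro mult_left_mono) auto
    also have "\<dots> \<le> u ^ 3 * integral {0..t M} (\<lambda>x. real (count_le t x) * weight u x)"
      using small M u \<open>K \<le> M\<close> \<open>0 < m0\<close>
      by (intro integral_count_le_weight_ge mono pos) (auto simp: m_def)
    finally show ?thesis
      by (simp add: m_def)
  qed
  then show ?thesis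
    using \<open>0 < c\<close>
    by (intro exI[of _ "c / 16"] conjI exI[of _ m0] exI[of _ "max 1 M0"] allI impI) auto
qed

lemma weight_integral_lower_bound_shifted:
  fixes t :: "nat \<Rightarrow> real" and \<beta> :: real
  assumes "-1 < \<beta>" and t: "\<forall>i\<ge>1. t i = real i + \<beta>"
  shows "\<exists>C>0. \<exists>D. \<exists>M0. \<forall>M\<ge>M0. \<forall>u\<ge>D.
           C * u * ln (min (t M) u)
             \<le> u ^ 3 * integral {0..t M} (\<lambda>x. real (count_le t x) * weight u x)"
proof (rule weight_integral_lower_bound)
  show "strict_mono_on {1..} t" "\<And>k. 1 \<le> k \<Longrightarrow> 0 < t k"
    using t \<open>-1 < \<beta>\<close> by (auto simp: strict_mono_on_def)
  have "filterlim (\<lambda>i. real i + \<beta>) at_top sequentially"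
    by real_asymp
  then show "filterlim t at_top sequentially"
    by (rule filterlim_cong[THEN iffD1, OF refl refl, rotated])
      (use t in \<open>auto simp: eventually_sequentially intro: exI[of _ 1]\<close>)
  show "\<exists>K. (\<forall>k\<in>{1..K}. 2 * t k \<le> m)
          \<and> 1 / (2 * (1 + \<bar>\<beta>\<bar>)) * ln m \<le> (\<Sum>k=1..K. 1 / t k)"
    if m: "max 16 (4 * \<bar>\<beta>\<bar>) \<le> m" for m
  proof -
    obtain K where "\<forall>k\<in>{1..K}. 2 * (real k + \<beta>) \<le> m"
        and "ln m / (2 * (1 + \<bar>\<beta>\<bar>)) \<le> (\<Sum>k=1..K. 1 / (real k + \<beta>))"
      using partial_sum_inverse_shifted_ge_ln[OF \<open>-1 < \<beta>\<close> m] by blast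
    moreover have "(\<Sum>k=1..K. 1 / t k) = (\<Sum>k=1..K. 1 / (real k + \<beta>))"
      using t by (intro sum.cong) auto
    ultimately show ?thesis
      using t by (intro exI[of _ K]) auto
  qed
qed (auto simp: add_pos_nonneg)

lemma weight_integral_lower_bound_powr:
  fixes t :: "nat \<Rightarrow> real" and \<alpha> :: real
  assumes "0 < \<alpha>" "\<alpha> \<le> 1" and t: "\<forall>i\<ge>1. t i = real i powr \<alpha>"
  shows "\<exists>C>0. \<exists>D. \<exists>M0. \<forall>M\<ge>M0. \<forall>u\<ge>D.
           C * u * (min (t M) u) powr (1 / \<alpha> - 1)
             \<le> u ^ 3 * integral {0..t M} (\<lambda>x. real (count_le t x) * weight u x)"
proof (rule weight_integral_lower_bound)
  show "strict_mono_on {1..} t" "\<And>k. 1 \<le> k \<Longrightarrow> 0 < t k"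
    using t \<open>0 < \<alpha>\<close> by (auto simp: strict_mono_on_def intro: powr_less_mono2)
  have "filterlim (\<lambda>i. real i powr \<alpha>) at_top sequentially"
    using \<open>0 < \<alpha>\<close> by real_asymp
  then show "filterlim t at_top sequentially"
    by (rule filterlim_cong[THEN iffD1, OF refl refl, rotated])
      (use t in \<open>auto simp: eventually_sequentially intro: exI[of _ 1]\<close>)
  show "\<exists>K. (\<forall>k\<in>{1..K}. 2 * t k \<le> m)
          \<and> 1 / (2 * 2 powr (1 / \<alpha> - 1)) * m powr (1 / \<alpha> - 1) \<le> (\<Sum>k=1..K. 1 / t k)"
    if m: "4 \<le> m" for m
  proof -
    obtain K where "\<forall>k\<in>{1..K}. 2 * real k powr \<alpha> \<le> m"
        and "m powr (1 / \<alpha> - 1) / (2 * 2 powr (1 / \<alpha> - 1)) \<le> (\<Sum>k=1..K. 1 / real k powr \<alpha>)"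
      using partial_sum_inverse_powr_ge[OF assms(1,2) m] by blast
    moreover have "(\<Sum>k=1..K. 1 / t k) = (\<Sum>k=1..K. 1 / real k powr \<alpha>)"
      using t by (intro sum.cong) auto
    ultimately show ?thesis
      using t by (intro exI[of _ K]) auto
  qed
qed auto

theorem lemma2p1:
  fixes t :: "nat \<Rightarrow> real" and \<rho> :: "real \<Rightarrow> real" and \<alpha> \<beta> :: real
  assumes "(\<beta> > -1 \<and> (\<forall>i\<ge>1. t i = real i + \<beta>) \<and> \<rho> = ln)
         \<or> (0 < \<alpha> \<and> \<alpha> < 1 \<and> (\<forall>i\<ge>1. t i = real i powr \<alpha>) \<and> \<rho> = (\<lambda>u. u powr (1 / \<alpha> - 1)))"
  shows "\<exists>C>0. \<exists>D. \<exists>M0. \<forall>M\<ge>M0. \<forall>u\<ge>D.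
           u ^ 3 * integral {0..t M}
             (\<lambda>x. real (count_le t x) / (x\<^sup>2 * (x\<^sup>2 + u\<^sup>2 + u * x * sqrt 2)))
           \<ge> C * u * \<rho> (min (t M) u)"
proof -
  have integrand: "real (count_le t x) / (x\<^sup>2 * (x\<^sup>2 + u\<^sup>2 + u * x * sqrt 2))
      = real (count_le t x) * weight u x" for x u
    by (simp add: weight_def)
  from assms show ?thesis
  proof (elim disjE conjE)
    assume "-1 < \<beta>" "\<forall>i\<ge>1. t i = real i + \<beta>" "\<rho> = ln"
    then show ?thesis
      using weight_integral_lower_bound_shifted[of \<beta> t] by (simp add: integrand)
  next
    assume "0 < \<alpha>" "\<alpha> < 1" "\<forall>i\<ge>1. t i = real i powr \<alpha>" "\<rho> = (\<lambda>u. u powr (1 / \<alpha> - 1))"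
    then show ?thesis
      using weight_integral_lower_bound_powr[of \<alpha> t] by (simp add: integrand)
  qed
qed

end
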